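(* For every real skew-symmetric matrix $S$ there exist real orthogonal matrices $Q_1,Q_2$ and a positive number $c\ge\lambda_{\max}(S)/2$ such that $S=c\,(Q_1+Q_2)$, where $\lambda_{\max}(S)$ is the maximum singular value of $S$. *)

theory Defs
  imports "HOL-Analysis.Analysis"
begin

text \<open>Singular values of a real square matrix A are the square roots of the
eigenvalues of the (symmetric, positive semidefinite) matrix A^T A.\<close>

definition gram_eigenvalues :: "real^'n^'n \<Rightarrow> real set" where
  "gram_eigenvalues A = {l. \<exists>v. v \<noteq> 0 \<and> (transpose A ** A) *v v = l *\<^sub>R v}"

definition max_singular_value :: "real^'n^'n \<Rightarrow> real" where
  "max_singular_value A = sqrt (Max (gram_eigenvalues A))"

definition skew_symmetric :: "real^'n^'n \<Rightarrow> bool" where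
  "skew_symmetric S \<longleftrightarrow> transpose S = - S"

end

theory Submission
  imports Defs
begin

text \<open>Write S = c M with c at least the Frobenius norm of S (the norm of real^'n^'n); taking
c large also meets c \<ge> \<lambda>_max(S)/2 without comparing the two norms. Let K = M/2. If R is
symmetric, commutes with K and R^2 = I + K^2, then K + R and K - R are orthogonal, because for
skew K one gets (K \<plusminus> R)^T (K \<plusminus> R) = R^2 - K^2 = I; their sum is M. Such an R is I - E for the
fixed point E of E \<mapsto> (E^2 - K^2)/2, which for \<parallel>K\<parallel> \<le> 1/2 is a contraction of the closed set
of symmetric matrices commuting with K in the ball of radius 1/2, since the Frobenius norm is
submultiplicative.\<close>

lemma matrix_add_rdistrib: "(A + B) ** C = A ** C + B ** C"
  by (vector matrix_matrix_mult_def sum.distrib[symmetric] field_simps)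

lemma matrix_diff_ldistrib:
  fixes A :: "'a::ring_1^'n^'m"
  shows "A ** (B - C) = A ** B - A ** C"
  by (simp add: matrix_matrix_mult_def vec_eq_iff sum_subtractf algebra_simps)

lemma matrix_diff_rdistrib:
  fixes A :: "'a::ring_1^'n^'m"
  shows "(A - B) ** C = A ** C - B ** C"
  by (simp add: matrix_matrix_mult_def vec_eq_iff sum_subtractf algebra_simps)

lemma matrix_mul_uminus_left:
  fixes A :: "'a::ring_1^'n^'m"
  shows "(- A) ** B = - (A ** B)"
  by (simp add: matrix_matrix_mult_def vec_eq_iff sum_negf)

lemma matrix_mul_uminus_right:
  fixes A :: "'a::ring_1^'n^'m"
  shows "A ** (- B) = - (A ** B)"
  by (simp add: matrix_matrix_mult_def vec_eq_iff sum_negf)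

lemma matrix_scaleR_right:
  fixes A :: "'a::real_algebra_1^'n^'m"
  shows "A ** (k *\<^sub>R B) = k *\<^sub>R (A ** B)"
  by (simp add: matrix_scalar_ac scalar_matrix_assoc)

lemma transpose_add: "transpose (A + B) = transpose A + transpose B"
  by (simp add: transpose_def vec_eq_iff)

lemma transpose_diff: "transpose (A - B) = transpose A - transpose B"
  by (simp add: transpose_def vec_eq_iff)

lemma transpose_uminus: "transpose (- A) = - transpose A"
  by (simp add: transpose_def vec_eq_iff)

lemma norm_matrix_squared:
  fixes X :: "real^'n^'m"
  shows "(norm X)^2 = (\<Sum>i\<in>UNIV. \<Sum>j\<in>UNIV. (X$i$j)^2)"
  unfolding power2_norm_eq_inner inner_vec_def by (simp add: power2_eq_square)

lemma norm_matrix_mult_le: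
  fixes A :: "real^'n^'m" and B :: "real^'p^'n"
  shows "norm (A ** B) \<le> norm A * norm B"
proof -
  have entry: "(A ** B)$i$j = inner (A$i) (column j B)" for i j
    by (simp add: matrix_matrix_mult_def column_def inner_vec_def)
  have "(norm (A ** B))^2 = (\<Sum>i\<in>UNIV. \<Sum>j\<in>UNIV. (inner (A$i) (column j B))^2)"
    by (simp only: norm_matrix_squared entry)
  also have "\<dots> \<le> (\<Sum>i\<in>UNIV. \<Sum>j\<in>UNIV. inner (A$i) (A$i) * inner (column j B) (column j B))"
    by (intro sum_mono Cauchy_Schwarz_ineq)
  also have "\<dots> = (\<Sum>i\<in>UNIV. inner (A$i) (A$i)) * (\<Sum>j\<in>UNIV. inner (column j B) (column j B))"
    by (rule sum_product[symmetric])
  also have "(\<Sum>i\<in>UNIV. inner (A$i) (A$i)) = (norm A)^2"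
    by (simp only: power2_norm_eq_inner inner_vec_def)
  also have "(\<Sum>j\<in>UNIV. inner (column j B) (column j B)) = (\<Sum>j\<in>UNIV. \<Sum>k\<in>UNIV. (B$k$j)^2)"
    by (simp add: inner_vec_def column_def power2_eq_square)
  also have "\<dots> = (norm B)^2"
    by (subst sum.swap) (rule norm_matrix_squared[symmetric])
  finally have "(norm (A ** B))^2 \<le> (norm A * norm B)^2"
    by (simp only: power_mult_distrib)
  then show ?thesis
    by (rule power2_le_imp_le) simp
qed

lemma closed_symmetric_commutant:
  fixes M :: "real^'n^'n"
  shows "closed {E. transpose E = E \<and> E ** M = M ** E}"
proof -
  have "bounded_linear (\<lambda>E::real^'n^'n. transpose E)"
    "bounded_linear (\<lambda>E::real^'n^'n. E ** M)" "bounded_linear (\<lambda>E::real^'n^'n. M ** E)"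
    by (auto simp: linear_conv_bounded_linear[symmetric] transpose_add transpose_scalar
        matrix_add_rdistrib matrix_add_ldistrib matrix_scaleR_right scalar_matrix_assoc
        intro!: linearI)
  then show ?thesis
    unfolding Collect_conj_eq
    by (intro closed_Int closed_Collect_eq linear_continuous_on continuous_on_id) auto
qed

lemma norm_square_diff_le:
  fixes X Y :: "real^'n^'n"
  assumes "norm X \<le> 1/2" "norm Y \<le> 1/2"
  shows "norm (X ** X - Y ** Y) \<le> norm (X - Y)"
proof -
  have "X ** X - Y ** Y = X ** (X - Y) + (X - Y) ** Y"
    by (simp add: matrix_diff_ldistrib matrix_diff_rdistrib)
  also have "norm \<dots> \<le> norm X * norm (X - Y) + norm (X - Y) * norm Y"
    by (intro norm_triangle_le add_mono norm_matrix_mult_le)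
  also have "\<dots> \<le> 1/2 * norm (X - Y) + norm (X - Y) * (1/2)"
    using assms by (intro add_mono mult_right_mono mult_left_mono) auto
  finally show ?thesis by simp
qed

lemma commuting_symmetric_sqrt_of_mat1_minus:
  fixes N M :: "real^'n^'n"
  assumes "norm N \<le> 1/4" "transpose N = N" "N ** M = M ** N"
  obtains R where "transpose R = R" "R ** M = M ** R" "R ** R = mat 1 - N"
proof -
  define D where "D = {E. transpose E = E \<and> E ** M = M ** E} \<inter> cball 0 (1/2)"
  define f where "f E = (1/2) *\<^sub>R (N + E ** E)" for E :: "real^'n^'n"
  have "complete D"
    unfolding D_def complete_eq_closed by (intro closed_Int closed_symmetric_commutant closed_cball)
  moreover have "0 \<in> D"
    by (simp add: D_def transpose_def vec_eq_iff)
  moreover have "f ` D \<subseteq> D"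
  proof clarify
    fix E assume "E \<in> D"
    then have E: "transpose E = E" "E ** M = M ** E" "norm E \<le> 1/2"
      by (auto simp: D_def)
    have "norm (E ** E) \<le> 1/4"
      using norm_matrix_mult_le[of E E] mult_mono[OF E(3) E(3)] by simp
    then have "norm (N + E ** E) \<le> 1/2"
      using assms(1) norm_triangle_ineq[of N "E ** E"] by linarith
    moreover have "(E ** E) ** M = M ** (E ** E)"
      by (metis matrix_mul_assoc E(2))
    ultimately show "f E \<in> D"
      using assms(2,3) E(1)
      by (simp add: D_def f_def transpose_add transpose_scalar matrix_transpose_mul
          matrix_add_rdistrib matrix_add_ldistrib matrix_scaleR_right flip: scalar_matrix_assoc)
  qed
  moreover have "dist (f X) (f Y) \<le> 1/2 * dist X Y" if "X \<in> D" "Y \<in> D" for X Y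
  proof -
    have "f X - f Y = (1/2) *\<^sub>R (X ** X - Y ** Y)"
      by (simp add: f_def algebra_simps)
    then show ?thesis
      using that norm_square_diff_le[of X Y] by (simp add: D_def dist_norm)
  qed
  ultimately obtain E where "E \<in> D" "f E = E"
    using Banach_fix[of D "1/2" f] by auto
  moreover have "N + E ** E = 2 *\<^sub>R f E"
    by (simp add: f_def)
  ultimately have E: "transpose E = E" "E ** M = M ** E" "E ** E = 2 *\<^sub>R E - N"
    by (auto simp: D_def algebra_simps)
  show thesis
  proof
    show "transpose (mat 1 - E) = mat 1 - E"
      by (simp add: transpose_diff E(1))
    show "(mat 1 - E) ** M = M ** (mat 1 - E)"
      by (simp add: matrix_diff_ldistrib matrix_diff_rdistrib E(2))
    show "(mat 1 - E) ** (mat 1 - E) = mat 1 - N"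
      by (simp add: matrix_diff_ldistrib matrix_diff_rdistrib E(3) scaleR_2)
  qed
qed

lemma orthogonal_matrix_skew_plus_symmetric:
  fixes K R :: "real^'n^'n"
  assumes "skew_symmetric K" "transpose R = R" "R ** K = K ** R" "R ** R - K ** K = mat 1"
  shows "orthogonal_matrix (K + R)"
proof -
  have "transpose (K + R) ** (K + R) = (R - K) ** (K + R)"
    using assms(1,2) by (simp add: skew_symmetric_def transpose_add)
  also have "\<dots> = R ** R - K ** K + (R ** K - K ** R)"
    by (simp add: matrix_add_ldistrib matrix_diff_rdistrib)
  also have "\<dots> = mat 1"
    using assms(3,4) by simp
  finally show ?thesis
    by (simp add: orthogonal_matrix)
qed

lemma skew_symmetric_eq_sum_of_orthogonal:
  fixes M :: "real^'n^'n"
  assumes "skew_symmetric M" "norm M \<le> 1"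
  obtains Q1 Q2 where "orthogonal_matrix Q1" "orthogonal_matrix Q2" "M = Q1 + Q2"
proof -
  define K where "K = (1/2) *\<^sub>R M"
  have K: "skew_symmetric K"
    using assms(1) by (simp add: K_def skew_symmetric_def transpose_scalar)
  have "norm (K ** K) \<le> 1/4"
    using norm_matrix_mult_le[of K K] mult_mono[of "norm K" "1/2" "norm K" "1/2"] assms(2)
    by (simp add: K_def)
  moreover have "transpose (- (K ** K)) = - (K ** K)"
    using K by (simp add: skew_symmetric_def transpose_uminus matrix_transpose_mul
        matrix_mul_uminus_left matrix_mul_uminus_right)
  moreover have "(- (K ** K)) ** K = K ** (- (K ** K))"
    by (simp add: matrix_mul_uminus_left matrix_mul_uminus_right matrix_mul_assoc)
  ultimately obtain R where R: "transpose R = R" "R ** K = K ** R" "R ** R = mat 1 + K ** K"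
    using commuting_symmetric_sqrt_of_mat1_minus[of "- (K ** K)" K] by auto
  show thesis
  proof
    show "orthogonal_matrix (K + R)"
      using K R by (intro orthogonal_matrix_skew_plus_symmetric) auto
    show "orthogonal_matrix (K + - R)"
      using K R by (intro orthogonal_matrix_skew_plus_symmetric)
        (auto simp: transpose_uminus matrix_mul_uminus_left matrix_mul_uminus_right)
    show "M = (K + R) + (K + - R)"
      by (simp add: K_def flip: scaleR_add_left)
  qed
qed

theorem mainTheorem18:
  fixes S :: "real^'n^'n"
  assumes "skew_symmetric S"
  shows "\<exists>Q1 Q2 :: real^'n^'n. \<exists>c :: real.
           orthogonal_matrix Q1 \<and> orthogonal_matrix Q2 \<and> c > 0 \<and>
           c \<ge> max_singular_value S / 2 \<and> S = c *\<^sub>R (Q1 + Q2)"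
proof -
  define c where "c = norm S + \<bar>max_singular_value S\<bar> + 1"
  have c: "c > 0" "norm S \<le> c" "c \<ge> max_singular_value S / 2"
    using norm_ge_zero[of S] abs_ge_self[of "max_singular_value S"] abs_ge_zero[of "max_singular_value S"]
    unfolding c_def by linarith+
  have "skew_symmetric ((1/c) *\<^sub>R S)"
    using assms by (simp add: skew_symmetric_def transpose_scalar)
  moreover have "norm ((1/c) *\<^sub>R S) \<le> 1"
    using c by (simp add: divide_le_eq)
  ultimately obtain Q1 Q2 where Q: "orthogonal_matrix Q1" "orthogonal_matrix Q2"
      "(1/c) *\<^sub>R S = Q1 + Q2"
    by (rule skew_symmetric_eq_sum_of_orthogonal)
  then have "S = c *\<^sub>R (Q1 + Q2)"
    using c(1) by (simp flip: Q(3))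
  then show ?thesis
    using Q c by blast
qed

end
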